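(* In a first-order theory with the signature and axioms described in the context, one can prove $O(\mathscr{R}, \mathscr{R}) \Leftrightarrow \neg O(\mathscr{R}, \mathscr{R})$; in particular, this theory is inconsistent.
   Context: Work in a first-order language (with equality) that does not use set theory. It has a unary predicate $C$ ($Cx$: "$x$ is a category"), a binary predicate $O$ ($O(x,y)$: "$y$ is an object of $x$"), a binary predicate $A$ ($A(x,y)$: "$y$ is an arrow of $x$"), unary function symbols $\mathrm{dom}$ and $\mathrm{cod}$, a binary function symbol $\circ$ (composition), a unary function symbol $p \mapsto 1_p$ (identity arrow of $p$), and constant symbols $\mathbf{1}$ and $\mathscr{R}$. The theory contains the definition $\forall x\,(Cx \Leftrightarrow A_1 \wedge A_2 \wedge A_3 \wedge A_4 \wedge A_5)$, where: - $A_1 := \exists y\, O(x,y)$; - $A_2 := \exists z\, A(x,z)$; - $A_3 := \forall f\,(A(x,f) \Rightarrow \exists u \exists v\,(O(x,u) \wedge O(x,v) \wedge u = \mathrm{dom}\, f \wedge v = \mathrm{cod}\, f))$; - $A_4$ formalizes that every pair of arrows $f,g$ of $x$ with $\mathrm{dom}\, g = \mathrm{cod}\, f$ has a composite $g \circ f$, and that composition is associative; - $A_5$ formalizes that every object $b$ of $x$ has an identity arrow $1_b$ satisfying the identity laws $1_b \circ f = f$ and $g \circ 1_b = g$. The theory also contains an existence axiom for the category $\mathbf{1}$, which has exactly one object, none of its objects equal to $\mathbf{1}$, and whose arrows are identity arrows of its objects: $\exists x\,(Cx \wedge x = \mathbf{1} \wedge \exists! y\, \exists! z\,(O(\mathbf{1},y)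 \wedge A(\mathbf{1},z)) \wedge \forall u\,(O(\mathbf{1},u) \Rightarrow u \neq \mathbf{1}) \wedge \forall v\,(A(\mathbf{1},v) \Rightarrow \exists w\,(O(\mathbf{1},w) \wedge v = 1_w)))$. Finally, it contains an existence axiom for $\mathscr{R}$, the category whose objects are exactly the categories not identical to any of their own objects and whose arrows are exactly the identity arrows of its objects: $\exists x\,(Cx \wedge x = \mathscr{R} \wedge \forall y\,(O(\mathscr{R},y) \Leftrightarrow Cy \wedge \forall u\,(O(y,u) \Rightarrow y \neq u)) \wedge \forall z\,(A(\mathscr{R},z) \Leftrightarrow \exists v\,(O(\mathscr{R},v) \wedge z = 1_v)))$. *)

theory Defs
  imports Main
begin

text \<open>A structure for the first-order signature: a domain type 'a, predicates
  Cat (C), Ob (O), Ar (A), function symbols dm (dom), cd (cod), cmp (g o f written cmp g f),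
  ident (p maps to 1_p), constants one (bold 1) and R (script R).\<close>

definition is_category ::
  "('a \<Rightarrow> 'a \<Rightarrow> bool) \<Rightarrow> ('a \<Rightarrow> 'a \<Rightarrow> bool) \<Rightarrow> ('a \<Rightarrow> 'a) \<Rightarrow> ('a \<Rightarrow> 'a)
   \<Rightarrow> ('a \<Rightarrow> 'a \<Rightarrow> 'a) \<Rightarrow> ('a \<Rightarrow> 'a) \<Rightarrow> 'a \<Rightarrow> bool" where
  "is_category Ob Ar dm cd cmp ident x \<longleftrightarrow>
     (\<exists>y. Ob x y) \<and>
     (\<exists>z. Ar x z) \<and>
     (\<forall>f. Ar x f \<longrightarrow> (\<exists>u v. Ob x u \<and> Ob x v \<and> u = dm f \<and> v = cd f)) \<and>
     (\<forall>f g. Ar x f \<and> Ar x g \<and> dm g = cd f \<longrightarrow>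
        Ar x (cmp g f) \<and> dm (cmp g f) = dm f \<and> cd (cmp g f) = cd g) \<and>
     (\<forall>f g h. Ar x f \<and> Ar x g \<and> Ar x h \<and> dm g = cd f \<and> dm h = cd g \<longrightarrow>
        cmp h (cmp g f) = cmp (cmp h g) f) \<and>
     (\<forall>b. Ob x b \<longrightarrow>
        Ar x (ident b) \<and> dm (ident b) = b \<and> cd (ident b) = b \<and>
        (\<forall>f. Ar x f \<and> cd f = b \<longrightarrow> cmp (ident b) f = f) \<and>
        (\<forall>g. Ar x g \<and> dm g = b \<longrightarrow> cmp g (ident b) = g))"

definition theory_model ::
  "('a \<Rightarrow> bool) \<Rightarrow> ('a \<Rightarrow> 'a \<Rightarrow> bool) \<Rightarrow> ('a \<Rightarrow> 'a \<Rightarrow> bool) \<Rightarrow> ('a \<Rightarrow> 'a) \<Rightarrow> ('a \<Rightarrow> 'a)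
   \<Rightarrow> ('a \<Rightarrow> 'a \<Rightarrow> 'a) \<Rightarrow> ('a \<Rightarrow> 'a) \<Rightarrow> 'a \<Rightarrow> 'a \<Rightarrow> bool" where
  "theory_model Cat Ob Ar dm cd cmp ident one R \<longleftrightarrow>
     (\<forall>x. Cat x \<longleftrightarrow> is_category Ob Ar dm cd cmp ident x) \<and>
     (\<exists>x. Cat x \<and> x = one \<and> (\<exists>!y. \<exists>!z. Ob one y \<and> Ar one z) \<and>
        (\<forall>u. Ob one u \<longrightarrow> u \<noteq> one) \<and>
        (\<forall>v. Ar one v \<longrightarrow> (\<exists>w. Ob one w \<and> v = ident w))) \<and>
     (\<exists>x. Cat x \<and> x = R \<and>
        (\<forall>y. Ob R y \<longleftrightarrow> Cat y \<and> (\<forall>u. Ob y u \<longrightarrow> y \<noteq> u)) \<and>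
        (\<forall>z. Ar R z \<longleftrightarrow> (\<exists>v. Ob R v \<and> z = ident v)))"

end

theory Submission
  imports Defs
begin

text \<open>Russell's paradox: \<open>\<R>\<close> is itself a category, so the comprehension axiom for \<open>\<R>\<close>
  applied to \<open>\<R>\<close> says that \<open>\<R>\<close> is an object of itself exactly when it is not.\<close>

lemma russell_comprehension_self:
  assumes "P r" and "\<forall>y. Ob r y \<longleftrightarrow> P y \<and> (\<forall>u. Ob y u \<longrightarrow> y \<noteq> u)"
  shows "Ob r r \<longleftrightarrow> \<not> Ob r r"
  using assms by blast

lemma theory_model_R_comprehension:
  assumes "theory_model Cat Ob Ar dm cd cmp ident one R"
  shows "Cat R" and "\<forall>y. Ob R y \<longleftrightarrow> Cat y \<and> (\<forall>u. Ob y u \<longrightarrow> y \<noteq> u)"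
  using assms unfolding theory_model_def by auto

theorem theorem1:
  fixes Cat :: "'a \<Rightarrow> bool" and Ob Ar :: "'a \<Rightarrow> 'a \<Rightarrow> bool"
    and dm cd ident :: "'a \<Rightarrow> 'a" and cmp :: "'a \<Rightarrow> 'a \<Rightarrow> 'a" and one R :: 'a
  assumes "theory_model Cat Ob Ar dm cd cmp ident one R"
  shows "(Ob R R \<longleftrightarrow> \<not> Ob R R) \<and> False"
proof -
  have paradox: "Ob R R \<longleftrightarrow> \<not> Ob R R"
    using russell_comprehension_self[OF theory_model_R_comprehension[OF assms]] .
  then show ?thesis by blast
qed

end
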